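(* $\mathfrak{cp}(\mathsf{null}\setminus\{\emptyset\},\subseteq)=\operatorname{cof}(\mathsf{null})$.
   Context: $\mathsf{null}$ is the ideal of Lebesgue measure zero subsets of $2^\omega$, here ordered by inclusion. For a poset $(P,\le)$, $F\subseteq P$ is a comparable family if for every $p\in P$ there is $q\in F$ with $p\le q$ or $q\le p$; $\mathfrak{cp}(P)$ is the minimal size of a comparable family. $\operatorname{cof}(\mathsf{null})$ is the minimal size of a family $\mathcal{F}\subseteq\mathsf{null}$ such that every null set is contained in some member of $\mathcal{F}$. *)

theory Defs
  imports "HOL-Probability.Probability"
begin

definition cantor_measure :: "(nat \<Rightarrow> bool) measure" where
  "cantor_measure = PiM UNIV (\<lambda>_. measure_pmf (bernoulli_pmf (1/2)))"

definition null_ideal :: "(nat \<Rightarrow> bool) set set" where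
  "null_ideal = {A. \<exists>B\<in>null_sets cantor_measure. A \<subseteq> B}"

definition comparable_family :: "'a set \<Rightarrow> ('a \<Rightarrow> 'a \<Rightarrow> bool) \<Rightarrow> 'a set \<Rightarrow> bool" where
  "comparable_family P le F \<longleftrightarrow> F \<subseteq> P \<and> (\<forall>p\<in>P. \<exists>q\<in>F. le p q \<or> le q p)"

definition min_card :: "('a set \<Rightarrow> bool) \<Rightarrow> 'a rel" where
  "min_card Q = card_of (SOME F. Q F \<and> (\<forall>F'. Q F' \<longrightarrow> ordLeq2 (card_of F) (card_of F')))"

definition cp :: "'a set \<Rightarrow> ('a \<Rightarrow> 'a \<Rightarrow> bool) \<Rightarrow> 'a rel" where
  "cp P le = min_card (comparable_family P le)"

definition cof_null :: "(nat \<Rightarrow> bool) set rel" where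
  "cof_null = min_card (\<lambda>F. F \<subseteq> null_ideal \<and> (\<forall>N\<in>null_ideal. \<exists>B\<in>F. N \<subseteq> B))"

end

theory Submission
  imports Defs
begin

text \<open>
  Every null set lies in a null \<open>G\<^sub>\<delta>\<close> set by outer regularity of the coin-tossing
  measure, and there are only continuum many \<open>G\<^sub>\<delta>\<close> sets, so \<open>cof(null) \<le> \<cc>\<close>.
  A cofinal family of null sets, minus \<open>\<emptyset>\<close>, is comparable, which gives
  \<open>\<cc>\<pp> \<le> cof(null)\<close>.

  Conversely let \<open>F\<close> be comparable. Since singletons are null, \<open>\<Union>F = 2\<^sup>\<omega>\<close>, so \<open>F\<close> is
  infinite. If \<open>|F| < \<cc>\<close>, pick \<open>x\<^sub>q \<in> q\<close> for \<open>q \<in> F\<close>; the set \<open>X\<close> of these points has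
  fewer than \<open>\<cc>\<close> differences, so some translate \<open>X + t\<close> is disjoint from \<open>X\<close>. For null \<open>N\<close>,
  the set \<open>N - X\<close> is comparable with some \<open>q \<in> F\<close> and cannot contain \<open>q\<close>, as \<open>x\<^sub>q \<in> X\<close>;
  so \<open>N \<subseteq> q \<union> X\<close>. Applying this to \<open>N\<close> and \<open>N + t\<close> yields \<open>N \<subseteq> q\<^sub>1 \<union> (q\<^sub>2 + t)\<close>,
  and these sets form a cofinal family of size \<open>|F \<times> F| = |F|\<close>.
\<close>

unbundle cardinal_syntax

section \<open>Translation invariance\<close>

abbreviation coin :: "bool measure" where
  "coin \<equiv> measure_pmf (bernoulli_pmf (1/2))"

lemma prob_space_cantor_measure: "prob_space cantor_measure"
  unfolding cantor_measure_def by (intro prob_space_PiM) (simp add: prob_space_measure_pmf)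

lemma space_cantor_measure [simp]: "space cantor_measure = UNIV"
  unfolding cantor_measure_def by (simp add: space_PiM)

lemma distr_PiM_coordinatewise:
  assumes M: "\<And>i. i \<in> I \<Longrightarrow> prob_space (M i)"
    and f: "\<And>i. i \<in> I \<Longrightarrow> f i \<in> measurable (M i) (M i)"
    and inv: "\<And>i. i \<in> I \<Longrightarrow> distr (M i) (M i) (f i) = M i"
  shows "distr (PiM I M) (PiM I M) (\<lambda>x. \<lambda>i\<in>I. f i (x i)) = PiM I M"
    (is "distr ?P ?P ?f = ?P")
proof (rule measure_eqI_PiM_infinite[symmetric, OF refl])
  interpret prob_space ?P using M by (rule prob_space_PiM)
  show "finite_measure ?P" by unfold_locales
  have f_meas: "?f \<in> measurable ?P ?P"
    using f by (intro measurable_PiM_single') (auto simp: space_PiM PiE_iff intro: measurable_space)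
  fix J A assume J: "finite J" "J \<subseteq> I" and A: "\<And>i. i \<in> J \<Longrightarrow> A i \<in> sets (M i)"
  have fA: "f i -` A i \<inter> space (M i) \<in> sets (M i)" if "i \<in> J" for i
    using that J A f by (auto intro: measurable_sets)
  have "?P (prod_emb I M J (Pi\<^sub>E J A)) = (\<Prod>i\<in>J. M i (A i))"
    using J A M by (intro emeasure_PiM_emb) auto
  also have "\<dots> = (\<Prod>i\<in>J. M i (f i -` A i \<inter> space (M i)))"
    using J A inv by (intro prod.cong refl) (metis emeasure_distr f subsetD)
  also have "\<dots> = ?P (prod_emb I M J (\<Pi>\<^sub>E i\<in>J. f i -` A i \<inter> space (M i)))"
    using J fA M by (intro emeasure_PiM_emb[symmetric]) auto
  also have "prod_emb I M J (\<Pi>\<^sub>E i\<in>J. f i -` A i \<inter> space (M i)) = ?f -` prod_emb I M J (Pi\<^sub>E J A) \<inter> space ?P"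
    using J measurable_space[OF f] by (auto simp: prod_emb_def space_PiM PiE_iff subset_iff)
  also have "?P \<dots> = distr ?P ?P ?f (prod_emb I M J (Pi\<^sub>E J A))"
    using J A f_meas by (intro emeasure_distr[symmetric] sets_PiM_I) auto
  finally show "?P (prod_emb I M J (Pi\<^sub>E J A)) = distr ?P ?P ?f (prod_emb I M J (Pi\<^sub>E J A))" .
qed simp

lemma distr_coin_flip: "distr coin coin (\<lambda>b. b \<noteq> c) = coin"
proof (rule measure_eqI)
  fix S :: "bool set"
  have "card ((\<lambda>b. b \<noteq> c) -` S) = card S"
    by (cases c) (auto intro!: card_vimage_inj simp: inj_def)
  then show "emeasure (distr coin coin (\<lambda>b. b \<noteq> c)) S = emeasure coin S"
    by (simp add: emeasure_distr emeasure_measure_pmf_finite)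
qed simp

definition cantor_add :: "(nat \<Rightarrow> bool) \<Rightarrow> (nat \<Rightarrow> bool) \<Rightarrow> nat \<Rightarrow> bool" where
  "cantor_add s x = (\<lambda>i. x i \<noteq> s i)"

lemma cantor_add_cancel [simp]: "cantor_add s (cantor_add s x) = x"
  by (auto simp: cantor_add_def)

lemma cantor_add_recover_shift: "cantor_add x (cantor_add s x) = s"
  by (auto simp: cantor_add_def)

lemma measurable_cantor_add: "cantor_add s \<in> measurable cantor_measure cantor_measure"
  unfolding cantor_measure_def cantor_add_def by (rule measurable_PiM_single') simp_all

lemma distr_cantor_add: "distr cantor_measure cantor_measure (cantor_add s) = cantor_measure"
proof -
  have "cantor_add s = (\<lambda>x. \<lambda>i\<in>UNIV. x i \<noteq> s i)"
    by (simp add: cantor_add_def fun_eq_iff)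
  then show ?thesis
    unfolding cantor_measure_def
    using distr_coin_flip
    by (simp only:) (rule distr_PiM_coordinatewise, simp_all add: prob_space_measure_pmf)
qed

lemma cantor_add_image_null_set:
  assumes "B \<in> null_sets cantor_measure"
  shows "cantor_add s ` B \<in> null_sets cantor_measure"
proof -
  have "cantor_add s ` B = cantor_add s -` B \<inter> space cantor_measure"
    by (auto intro: image_eqI[where x = "cantor_add s _"])
  moreover have "B \<in> null_sets (distr cantor_measure cantor_measure (cantor_add s))"
    using assms by (simp add: distr_cantor_add)
  then have "cantor_add s -` B \<inter> space cantor_measure \<in> null_sets cantor_measure"
    using null_sets_distr_iff[OF measurable_cantor_add] by blast
  ultimately show ?thesis by simp
qed

section \<open>Cylinders and open sets\<close>

definition cylinder :: "bool list \<Rightarrow> (nat \<Rightarrow> bool) set" where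
  "cylinder xs = {x. \<forall>i<length xs. x i = xs ! i}"

lemma cylinder_map_upt: "cylinder (map x [0..<n]) = {y. \<forall>i<n. y i = x i}"
  by (auto simp: cylinder_def)

lemma cylinder_eq_prod_emb:
  "cylinder xs = prod_emb UNIV (\<lambda>_. coin) {..<length xs} (\<Pi>\<^sub>E i\<in>{..<length xs}. {xs ! i})"
  by (auto simp: cylinder_def prod_emb_iff extensional_def)

lemma sets_cylinder: "cylinder xs \<in> sets cantor_measure"
  unfolding cylinder_eq_prod_emb cantor_measure_def by (rule sets_PiM_I) auto

lemma emeasure_cylinder: "emeasure cantor_measure (cylinder xs) = ennreal ((1/2) ^ length xs)"
proof -
  have "emeasure cantor_measure (cylinder xs) = (\<Prod>i<length xs. emeasure coin {xs ! i})"
    unfolding cylinder_eq_prod_emb cantor_measure_def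
    by (intro emeasure_PiM_emb) (auto simp: prob_space_measure_pmf)
  also have "\<dots> = (\<Prod>i<length xs. ennreal (1/2))"
    by (simp add: emeasure_pmf_single)
  finally show ?thesis
    using ennreal_power[of "1/2" "length xs"] by simp
qed

text \<open>The product topology of \<open>2\<^sup>\<omega>\<close>, phrased through initial segments so that every
  open set is visibly a countable union of cylinders.\<close>

definition cantor_open :: "(nat \<Rightarrow> bool) set \<Rightarrow> bool" where
  "cantor_open A \<longleftrightarrow> (\<forall>x\<in>A. \<exists>n. {y. \<forall>i<n. y i = x i} \<subseteq> A)"

lemma cantor_open_eq_Union_cylinders:
  assumes "cantor_open A"
  shows "A = \<Union> (cylinder ` {xs. cylinder xs \<subseteq> A})"
proof
  show "A \<subseteq> \<Union> (cylinder ` {xs. cylinder xs \<subseteq> A})"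
  proof
    fix x assume "x \<in> A"
    then obtain n where "cylinder (map x [0..<n]) \<subseteq> A"
      using assms by (auto simp: cantor_open_def cylinder_map_upt)
    moreover have "x \<in> cylinder (map x [0..<n])"
      by (simp add: cylinder_map_upt)
    ultimately show "x \<in> \<Union> (cylinder ` {xs. cylinder xs \<subseteq> A})"
      by blast
  qed
qed blast

lemma sets_cantor_open:
  assumes "cantor_open A"
  shows "A \<in> sets cantor_measure"
proof -
  have "\<Union> (cylinder ` {xs. cylinder xs \<subseteq> A}) \<in> sets cantor_measure"
    by (intro sets.countable_UN') (auto simp: sets_cylinder)
  with cantor_open_eq_Union_cylinders[OF assms] show ?thesis
    by metis
qed

lemma cantor_open_Int: "cantor_open A \<Longrightarrow> cantor_open B \<Longrightarrow> cantor_open (A \<inter> B)"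
  unfolding cantor_open_def
proof (intro ballI)
  fix x assume "\<forall>x\<in>A. \<exists>n. {y. \<forall>i<n. y i = x i} \<subseteq> A" "\<forall>x\<in>B. \<exists>n. {y. \<forall>i<n. y i = x i} \<subseteq> B"
    and "x \<in> A \<inter> B"
  then obtain n m where "{y. \<forall>i<n. y i = x i} \<subseteq> A" "{y. \<forall>i<m. y i = x i} \<subseteq> B"
    by blast
  then have "{y. \<forall>i<max n m. y i = x i} \<subseteq> A \<inter> B"
    by auto
  then show "\<exists>k. {y. \<forall>i<k. y i = x i} \<subseteq> A \<inter> B" ..
qed

lemma cantor_open_UNIV: "cantor_open UNIV"
  by (simp add: cantor_open_def)

lemma cantor_open_INT:
  "finite I \<Longrightarrow> (\<And>i. i \<in> I \<Longrightarrow> cantor_open (A i)) \<Longrightarrow> cantor_open (\<Inter>i\<in>I. A i)"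
  by (induction I rule: finite_induct) (auto simp: cantor_open_UNIV intro: cantor_open_Int)

lemma cantor_open_UN:
  assumes "\<And>i. i \<in> I \<Longrightarrow> cantor_open (A i)"
  shows "cantor_open (\<Union>i\<in>I. A i)"
  unfolding cantor_open_def
proof
  fix x assume "x \<in> (\<Union>i\<in>I. A i)"
  then obtain i where "i \<in> I" "x \<in> A i"
    by blast
  with assms obtain n where "{y. \<forall>i<n. y i = x i} \<subseteq> A i"
    unfolding cantor_open_def by blast
  with \<open>i \<in> I\<close> show "\<exists>n. {y. \<forall>i<n. y i = x i} \<subseteq> (\<Union>i\<in>I. A i)"
    by blast
qed

lemma cantor_openI_finite_dependence:
  assumes "\<And>x y. \<forall>i<n. x i = y i \<Longrightarrow> x \<in> A \<Longrightarrow> y \<in> A"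
  shows "cantor_open A"
  unfolding cantor_open_def using assms by (blast intro: exI[of _ n])

section \<open>Outer regularity\<close>

definition cantor_regular :: "(nat \<Rightarrow> bool) set \<Rightarrow> bool" where
  "cantor_regular A \<longleftrightarrow> A \<in> sets cantor_measure \<and>
     (\<forall>e>0. \<exists>U V. cantor_open U \<and> cantor_open V \<and> A \<subseteq> U \<and> - V \<subseteq> A \<and>
        measure cantor_measure (U \<inter> V) < e)"

lemma sets_cantor_measure: "sets cantor_measure = sigma_sets UNIV (prod_algebra UNIV (\<lambda>_::nat. coin))"
  by (simp add: cantor_measure_def sets_PiM)

lemma cantor_regular_prod_algebra:
  assumes "A \<in> prod_algebra UNIV (\<lambda>_::nat. coin)"
  shows "cantor_regular A"
proof -
  obtain J E where A: "A = prod_emb UNIV (\<lambda>_. coin) J (Pi\<^sub>E J E)" and "finite J"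
    using prod_algebraE[OF assms] by metis
  then obtain n where n: "\<forall>j\<in>J. j < n"
    using finite_nat_bounded by (meson lessThan_iff subsetD)
  have same: "x \<in> A \<longleftrightarrow> y \<in> A" if "\<forall>i<n. x i = y i" for x y
  proof -
    have "restrict x J = restrict y J" using that n by (auto simp: restrict_def)
    then show ?thesis unfolding A prod_emb_iff by (simp add: extensional_def)
  qed
  have "cantor_open A" "cantor_open (- A)"
    by (rule cantor_openI_finite_dependence[of n], use same in blast)+
  moreover have "A \<in> sets cantor_measure"
    using assms by (simp add: sets_cantor_measure)
  ultimately show ?thesis
    unfolding cantor_regular_def
  proof (intro conjI allI impI)
    fix e :: real assume "e > 0"
    then show "\<exists>U V. cantor_open U \<and> cantor_open V \<and> A \<subseteq> U \<and> - V \<subseteq> A \<and>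
        measure cantor_measure (U \<inter> V) < e"
      using \<open>cantor_open A\<close> \<open>cantor_open (- A)\<close> by (intro exI[of _ A] exI[of _ "- A"]) simp
  qed
qed

lemma cantor_regular_Compl:
  assumes "cantor_regular A"
  shows "cantor_regular (- A)"
  unfolding cantor_regular_def
proof (intro conjI allI impI)
  show "- A \<in> sets cantor_measure"
    using assms sets.compl_sets[of A cantor_measure] by (simp add: cantor_regular_def Compl_eq_Diff_UNIV)
  fix e :: real assume "e > 0"
  then obtain U V where UV: "cantor_open U" "cantor_open V" "A \<subseteq> U" "- V \<subseteq> A"
      "measure cantor_measure (U \<inter> V) < e"
    using assms unfolding cantor_regular_def by blast
  moreover have "- A \<subseteq> V" "- U \<subseteq> - A" "V \<inter> U = U \<inter> V"
    using UV by blast+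
  ultimately show "\<exists>U V. cantor_open U \<and> cantor_open V \<and> - A \<subseteq> U \<and> - V \<subseteq> - A \<and>
      measure cantor_measure (U \<inter> V) < e"
    by (intro exI[of _ V] exI[of _ U]) simp
qed

lemma (in finite_measure) measure_UN_le_half_series:
  assumes "\<And>i. A i \<in> sets M" and "\<And>i. measure M (A i) \<le> e * (1/2) ^ Suc i"
  shows "measure M (\<Union>i. A i) \<le> e"
proof -
  have bound: "(\<lambda>i. e * (1/2) ^ Suc i) sums e"
    using sums_mult[OF power_half_series, of e] by simp
  have "summable (\<lambda>i. measure M (A i))"
  proof (rule summable_comparison_test')
    show "summable (\<lambda>i. e * (1/2) ^ Suc i)"
      using bound by (rule sums_summable)
    show "norm (measure M (A i)) \<le> e * (1/2) ^ Suc i" for i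
      using assms(2)[of i] by simp
  qed
  then have "measure M (\<Union>i. A i) \<le> (\<Sum>i. measure M (A i))"
    using assms(1) by (intro finite_measure_subadditive_countably) auto
  also have "\<dots> \<le> e"
    using bound assms(2) \<open>summable _\<close> sums_summable[OF bound] sums_unique[OF bound]
    by (metis suminf_le)
  finally show ?thesis .
qed

lemma (in finite_measure) measure_INT_atMost_approx:
  fixes V :: "nat \<Rightarrow> 'a set"
  assumes "\<And>i. V i \<in> sets M" and "e > 0"
  obtains N where "measure M (\<Inter>i\<le>N. V i) < measure M (\<Inter>i. V i) + e"
proof -
  have "(\<lambda>N. measure M (\<Inter>i\<le>N. V i)) \<longlonglongrightarrow> measure M (\<Inter>N. \<Inter>i\<le>N. V i)"
    using assms(1) by (intro finite_Lim_measure_decseq) (auto simp: decseq_def intro: sets.finite_INT)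
  moreover have "(\<Inter>N. \<Inter>i\<le>N. V i) = (\<Inter>i. V i)"
    by blast
  ultimately have "eventually (\<lambda>N. measure M (\<Inter>i\<le>N. V i) < measure M (\<Inter>i. V i) + e) sequentially"
    using assms(2) by (intro order_tendstoD) auto
  then show ?thesis
    using that by (auto dest: eventually_happens)
qed

lemma cantor_regular_UN:
  assumes "\<And>i::nat. cantor_regular (A i)"
  shows "cantor_regular (\<Union>i. A i)"
  unfolding cantor_regular_def
proof (intro conjI allI impI)
  interpret prob_space cantor_measure
    by (rule prob_space_cantor_measure)
  show "(\<Union>i. A i) \<in> sets cantor_measure"
    using assms by (auto simp: cantor_regular_def)
  fix e :: real assume "e > 0"
  have "\<forall>i. \<exists>U V. cantor_open U \<and> cantor_open V \<and> A i \<subseteq> U \<and> - V \<subseteq> A i \<and>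
      measure cantor_measure (U \<inter> V) < e/2 * (1/2) ^ Suc i"
  proof
    fix i
    have "e/2 * (1/2) ^ Suc i > 0"
      using \<open>e > 0\<close> by simp
    then show "\<exists>U V. cantor_open U \<and> cantor_open V \<and> A i \<subseteq> U \<and> - V \<subseteq> A i \<and>
        measure cantor_measure (U \<inter> V) < e/2 * (1/2) ^ Suc i"
      using assms[of i] unfolding cantor_regular_def by blast
  qed
  then obtain U V where UV: "\<And>i. cantor_open (U i)" "\<And>i. cantor_open (V i)" "\<And>i. A i \<subseteq> U i"
      "\<And>i. - V i \<subseteq> A i" "\<And>i. measure cantor_measure (U i \<inter> V i) < e/2 * (1/2) ^ Suc i"
    by metis
  have sets_UV: "U i \<in> sets cantor_measure" "V i \<in> sets cantor_measure" for i
    using UV by (simp_all add: sets_cantor_open)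
  obtain N where N: "measure cantor_measure (\<Inter>i\<le>N. V i) < measure cantor_measure (\<Inter>i. V i) + e/2"
    using measure_INT_atMost_approx[of V "e/2"] sets_UV \<open>e > 0\<close> by auto
  have "(\<Union>i. U i) \<inter> (\<Inter>i\<le>N. V i) \<subseteq> (\<Union>i. U i \<inter> V i) \<union> ((\<Inter>i\<le>N. V i) - (\<Inter>i. V i))"
    by blast
  then have "measure cantor_measure ((\<Union>i. U i) \<inter> (\<Inter>i\<le>N. V i))
      \<le> measure cantor_measure (\<Union>i. U i \<inter> V i) + measure cantor_measure ((\<Inter>i\<le>N. V i) - (\<Inter>i. V i))"
    using sets_UV by (intro order.trans[OF finite_measure_mono measure_Un_le]) auto
  also have "measure cantor_measure (\<Union>i. U i \<inter> V i) \<le> e/2"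
    using sets_UV UV(5) by (intro measure_UN_le_half_series) (auto intro: less_imp_le)
  also have "measure cantor_measure ((\<Inter>i\<le>N. V i) - (\<Inter>i. V i)) < e/2"
    using N sets_UV by (subst finite_measure_Diff) auto
  finally have "measure cantor_measure ((\<Union>i. U i) \<inter> (\<Inter>i\<le>N. V i)) < e"
    by simp
  moreover have "cantor_open (\<Union>i. U i)" "cantor_open (\<Inter>i\<le>N. V i)"
    using UV by (auto intro: cantor_open_UN cantor_open_INT)
  moreover have "(\<Union>i. A i) \<subseteq> (\<Union>i. U i)" "- (\<Inter>i\<le>N. V i) \<subseteq> (\<Union>i. A i)"
    using UV(3,4) by blast+
  ultimately show "\<exists>U V. cantor_open U \<and> cantor_open V \<and> (\<Union>i. A i) \<subseteq> U \<and> - V \<subseteq> (\<Union>i. A i) \<and>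
      measure cantor_measure (U \<inter> V) < e"
    by blast
qed

lemma cantor_regular_sets:
  assumes "A \<in> sets cantor_measure"
  shows "cantor_regular A"
proof -
  have "A \<in> sigma_sets UNIV (prod_algebra UNIV (\<lambda>_::nat. coin))"
    using assms by (simp add: sets_cantor_measure)
  then show ?thesis
  proof (induction rule: sigma_sets.induct)
    case (Basic a)
    then show ?case by (rule cantor_regular_prod_algebra)
  next
    case Empty
    have "cantor_open {}"
      by (simp add: cantor_open_def)
    then show ?case
      unfolding cantor_regular_def using cantor_open_UNIV
      by (intro conjI allI impI exI[of _ "{}"] exI[of _ UNIV]) simp_all
  next
    case (Compl a)
    then show ?case using cantor_regular_Compl by (simp add: Compl_eq_Diff_UNIV)
  next
    case (Union a)
    then show ?case by (intro cantor_regular_UN)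
  qed
qed

lemma cantor_measure_outer_regular:
  assumes "A \<in> sets cantor_measure" and "e > 0"
  obtains U where "cantor_open U" "A \<subseteq> U" "measure cantor_measure U < measure cantor_measure A + e"
proof -
  interpret prob_space cantor_measure
    by (rule prob_space_cantor_measure)
  obtain U V where UV: "cantor_open U" "cantor_open V" "A \<subseteq> U" "- V \<subseteq> A"
      "measure cantor_measure (U \<inter> V) < e"
    using cantor_regular_sets[OF assms(1)] assms(2) unfolding cantor_regular_def by blast
  have sets_UV: "U \<in> sets cantor_measure" "V \<in> sets cantor_measure" "- V \<in> sets cantor_measure"
    using UV(1,2) sets.compl_sets[OF sets_cantor_open[OF UV(2)]]
    by (simp_all add: sets_cantor_open Compl_eq_Diff_UNIV)
  have "measure cantor_measure U \<le> measure cantor_measure ((U \<inter> V) \<union> - V)"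
    using sets_UV by (intro finite_measure_mono) auto
  also have "\<dots> \<le> measure cantor_measure (U \<inter> V) + measure cantor_measure (- V)"
    using sets_UV by (intro measure_Un_le) auto
  also have "measure cantor_measure (- V) \<le> measure cantor_measure A"
    using UV(4) assms(1) by (rule finite_measure_mono)
  finally show ?thesis
    using that UV(1,3,5) by simp
qed

section \<open>Cofinality of the null ideal is at most the continuum\<close>

lemma (in finite_measure) null_setsI_measure_le_tendsto:
  assumes "A \<in> sets M" and "\<And>n. measure M A \<le> u n" and "u \<longlonglongrightarrow> 0"
  shows "A \<in> null_sets M"
proof -
  have "measure M A \<le> 0"
    using assms(2,3) by (intro LIMSEQ_le_const) auto
  with assms(1) show ?thesis
    using measure_nonneg[of M A] by (simp add: emeasure_eq_measure null_setsI)
qed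

text \<open>The \<open>G\<^sub>\<delta>\<close> set coded by \<open>f\<close>; the codes form a set of size continuum.\<close>

definition cylinder_Gdelta :: "(nat \<Rightarrow> bool list set) \<Rightarrow> (nat \<Rightarrow> bool) set" where
  "cylinder_Gdelta f = (\<Inter>n. \<Union> (cylinder ` f n))"

lemma null_set_subset_null_cylinder_Gdelta:
  assumes "B \<in> null_sets cantor_measure"
  obtains f where "B \<subseteq> cylinder_Gdelta f" "cylinder_Gdelta f \<in> null_sets cantor_measure"
proof -
  interpret prob_space cantor_measure
    by (rule prob_space_cantor_measure)
  have B: "B \<in> sets cantor_measure" "measure cantor_measure B = 0"
    using assms by (auto simp: emeasure_eq_measure)
  have "\<exists>U. cantor_open U \<and> B \<subseteq> U \<and> measure cantor_measure U < inverse (real (Suc n))" for n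
    using cantor_measure_outer_regular[OF B(1), of "inverse (real (Suc n))"] B(2) by auto
  then obtain U where U: "\<And>n. cantor_open (U n)" "\<And>n. B \<subseteq> U n"
      "\<And>n. measure cantor_measure (U n) < inverse (real (Suc n))"
    by metis
  define f where "f n = {xs. cylinder xs \<subseteq> U n}" for n
  have Gdelta: "cylinder_Gdelta f = (\<Inter>n. U n)"
    unfolding cylinder_Gdelta_def f_def using cantor_open_eq_Union_cylinders[OF U(1)] by simp
  have sets_Gdelta: "cylinder_Gdelta f \<in> sets cantor_measure"
    unfolding Gdelta using U(1) by (auto intro: sets_cantor_open)
  have "measure cantor_measure (cylinder_Gdelta f) \<le> inverse (real (Suc n))" for n
  proof -
    have "measure cantor_measure (cylinder_Gdelta f) \<le> measure cantor_measure (U n)"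
      unfolding Gdelta using U(1) by (intro finite_measure_mono) (auto intro: sets_cantor_open)
    with U(3)[of n] show ?thesis
      by linarith
  qed
  with sets_Gdelta have "cylinder_Gdelta f \<in> null_sets cantor_measure"
    using LIMSEQ_inverse_real_of_nat by (rule null_setsI_measure_le_tendsto)
  moreover have "B \<subseteq> cylinder_Gdelta f"
    unfolding Gdelta using U(2) by blast
  ultimately show ?thesis
    using that by blast
qed

lemma card_of_cylinder_codes: "|UNIV :: (nat \<Rightarrow> bool list set) set| \<le>o |UNIV :: (nat \<Rightarrow> bool) set|"
proof -
  define g :: "(nat \<Rightarrow> bool list set) \<Rightarrow> nat \<Rightarrow> bool" where
    "g f k = (from_nat (snd (prod_decode k)) \<in> f (fst (prod_decode k)))" for f k
  have "inj g"
  proof (rule injI)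
    fix f f' assume eq: "g f = g f'"
    show "f = f'"
    proof (intro ext set_eqI)
      fix n :: nat and xs :: "bool list"
      from eq have "g f (prod_encode (n, to_nat xs)) = g f' (prod_encode (n, to_nat xs))"
        by simp
      then show "xs \<in> f n \<longleftrightarrow> xs \<in> f' n"
        by (simp add: g_def)
    qed
  qed
  then show ?thesis
    using card_of_ordLeq[of UNIV UNIV] by blast
qed

definition null_cofinal :: "(nat \<Rightarrow> bool) set set \<Rightarrow> bool" where
  "null_cofinal G \<longleftrightarrow> G \<subseteq> null_ideal \<and> (\<forall>N\<in>null_ideal. \<exists>B\<in>G. N \<subseteq> B)"

lemma cof_null_eq_min_card: "cof_null = min_card null_cofinal"
  unfolding cof_null_def null_cofinal_def[abs_def] ..

lemma null_cofinal_le_continuum: "\<exists>G. null_cofinal G \<and> |G| \<le>o |UNIV :: (nat \<Rightarrow> bool) set|"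
proof -
  define G where "G = {C \<in> range cylinder_Gdelta. C \<in> null_sets cantor_measure}"
  have "null_cofinal G"
    unfolding null_cofinal_def null_ideal_def G_def
    by (blast elim: null_set_subset_null_cylinder_Gdelta)
  moreover have "|G| \<le>o |UNIV :: (nat \<Rightarrow> bool) set|"
    using card_of_mono1[of G "range cylinder_Gdelta"] card_of_image[of cylinder_Gdelta UNIV]
      card_of_cylinder_codes unfolding G_def by (blast intro: ordLeq_transitive)
  ultimately show ?thesis
    by blast
qed

section \<open>Comparable families\<close>

abbreviation null_comparable :: "(nat \<Rightarrow> bool) set set \<Rightarrow> bool" where
  "null_comparable \<equiv> comparable_family (null_ideal - {{}}) (\<subseteq>)"

lemma null_ideal_subset: "N \<in> null_ideal \<Longrightarrow> M \<subseteq> N \<Longrightarrow> M \<in> null_ideal"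
  unfolding null_ideal_def by blast

lemma null_ideal_Un:
  assumes "N \<in> null_ideal" and "M \<in> null_ideal"
  shows "N \<union> M \<in> null_ideal"
proof -
  obtain A B where "A \<in> null_sets cantor_measure" "N \<subseteq> A" "B \<in> null_sets cantor_measure" "M \<subseteq> B"
    using assms unfolding null_ideal_def by blast
  then have "A \<union> B \<in> null_sets cantor_measure" "N \<union> M \<subseteq> A \<union> B"
    by auto
  then show ?thesis
    unfolding null_ideal_def by blast
qed

lemma cantor_add_image_null_ideal:
  assumes "N \<in> null_ideal"
  shows "cantor_add s ` N \<in> null_ideal"
proof -
  obtain B where "B \<in> null_sets cantor_measure" "N \<subseteq> B"
    using assms unfolding null_ideal_def by blast
  then have "cantor_add s ` B \<in> null_sets cantor_measure" "cantor_add s ` N \<subseteq> cantor_add s ` B"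
    by (simp_all add: cantor_add_image_null_set image_mono)
  then show ?thesis
    unfolding null_ideal_def by blast
qed

lemma singleton_in_null_ideal: "{x} \<in> null_ideal"
proof -
  interpret prob_space cantor_measure
    by (rule prob_space_cantor_measure)
  define B where "B = (\<Inter>n. cylinder (map x [0..<n]))"
  have sets_B: "B \<in> sets cantor_measure"
    unfolding B_def by (intro sets.countable_INT) (auto simp: sets_cylinder)
  have bound: "measure cantor_measure B \<le> (1/2) ^ n" for n
  proof -
    have "measure cantor_measure B \<le> measure cantor_measure (cylinder (map x [0..<n]))"
      unfolding B_def by (intro finite_measure_mono) (auto simp: sets_cylinder)
    also have "\<dots> = (1/2) ^ n"
      using emeasure_cylinder[of "map x [0..<n]"] by (simp add: measure_def)
    finally show ?thesis .
  qed
  have "B \<in> null_sets cantor_measure"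
    using sets_B bound LIMSEQ_power_zero[of "1/2 :: real"] by (rule null_setsI_measure_le_tendsto) simp
  moreover have "{x} \<subseteq> B"
    by (auto simp: B_def cylinder_map_upt)
  ultimately show ?thesis
    unfolding null_ideal_def by blast
qed

lemma null_ideal_finite_Union: "finite F \<Longrightarrow> F \<subseteq> null_ideal \<Longrightarrow> \<Union>F \<in> null_ideal"
proof (induction F rule: finite_induct)
  case empty
  show ?case
    using null_ideal_subset[OF singleton_in_null_ideal] by blast
next
  case (insert q F)
  then show ?case
    by (simp add: null_ideal_Un)
qed

lemma UNIV_not_in_null_ideal: "UNIV \<notin> null_ideal"
proof
  interpret prob_space cantor_measure
    by (rule prob_space_cantor_measure)
  assume "UNIV \<in> null_ideal"
  then obtain B where "B \<in> null_sets cantor_measure" "UNIV \<subseteq> B"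
    unfolding null_ideal_def by blast
  moreover from \<open>UNIV \<subseteq> B\<close> have "B = space cantor_measure"
    by auto
  ultimately show False
    by (metis emeasure_space_1 null_setsD1 zero_neq_one)
qed

lemma null_comparable_Union_eq_UNIV:
  assumes "null_comparable F"
  shows "\<Union>F = UNIV"
proof -
  have "x \<in> \<Union>F" for x
  proof -
    have "{x} \<in> null_ideal - {{}}"
      using singleton_in_null_ideal by simp
    then obtain q where "q \<in> F" "{x} \<subseteq> q \<or> q \<subseteq> {x}"
      using assms unfolding comparable_family_def by blast
    moreover have "q \<noteq> {}"
      using assms \<open>q \<in> F\<close> unfolding comparable_family_def by blast
    ultimately show ?thesis
      by blast
  qed
  then show ?thesis
    by blast
qed

lemma null_comparable_infinite:
  assumes "null_comparable F"
  shows "infinite F"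
proof
  assume "finite F"
  moreover have "F \<subseteq> null_ideal"
    using assms unfolding comparable_family_def by blast
  ultimately have "\<Union>F \<in> null_ideal"
    by (rule null_ideal_finite_Union)
  then show False
    using null_comparable_Union_eq_UNIV[OF assms] UNIV_not_in_null_ideal by simp
qed

lemma null_comparable_of_null_cofinal:
  assumes "null_cofinal G"
  shows "null_comparable (G - {{}})"
  using assms unfolding null_cofinal_def comparable_family_def by blast

lemma exists_cantor_add_disjoint:
  assumes "\<not> |UNIV :: (nat \<Rightarrow> bool) set| \<le>o |X \<times> X|"
  obtains t where "X \<inter> cantor_add t ` X = {}"
proof -
  have "(\<lambda>(x, y). cantor_add x y) ` (X \<times> X) \<noteq> UNIV"
  proof
    assume "(\<lambda>(x, y). cantor_add x y) ` (X \<times> X) = UNIV"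
    then have "|UNIV :: (nat \<Rightarrow> bool) set| \<le>o |X \<times> X|"
      using card_of_image[of "\<lambda>(x, y). cantor_add x y" "X \<times> X"] by simp
    with assms show False ..
  qed
  then obtain t where t: "t \<notin> (\<lambda>(x, y). cantor_add x y) ` (X \<times> X)"
    by blast
  have "X \<inter> cantor_add t ` X = {}"
  proof (rule ccontr)
    assume "X \<inter> cantor_add t ` X \<noteq> {}"
    then obtain x where "x \<in> X" "cantor_add t x \<in> X"
      by blast
    then have "cantor_add x (cantor_add t x) \<in> (\<lambda>(x, y). cantor_add x y) ` (X \<times> X)"
      by force
    with t show False
      by (simp add: cantor_add_recover_shift)
  qed
  with that show ?thesis .
qed

lemma null_ideal_subset_Un:
  assumes "null_comparable F" and "\<And>q. q \<in> F \<Longrightarrow> q \<inter> X \<noteq> {}"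
    and "N \<in> null_ideal"
  obtains q where "q \<in> F" "N \<subseteq> q \<union> X"
proof (cases "N \<subseteq> X")
  case True
  moreover have "F \<noteq> {}"
    using null_comparable_infinite[OF assms(1)] by auto
  ultimately show ?thesis
    using that by blast
next
  case False
  have "N - X \<in> null_ideal"
    using assms(3) by (rule null_ideal_subset) blast
  with False have "N - X \<in> null_ideal - {{}}"
    by blast
  then obtain q where "q \<in> F" "N - X \<subseteq> q \<or> q \<subseteq> N - X"
    using assms(1) unfolding comparable_family_def by blast
  moreover have "\<not> q \<subseteq> N - X"
    using assms(2)[OF \<open>q \<in> F\<close>] by blast
  ultimately have "N \<subseteq> q \<union> X"
    by blast
  with \<open>q \<in> F\<close> show ?thesis
    by (rule that)
qed

lemma null_ideal_subset_Un_cantor_add: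
  assumes comparable: "null_comparable F"
    and meets: "\<And>q. q \<in> F \<Longrightarrow> q \<inter> X \<noteq> {}" and disjoint: "X \<inter> cantor_add t ` X = {}"
    and "N \<in> null_ideal"
  obtains q1 q2 where "q1 \<in> F" "q2 \<in> F" "N \<subseteq> q1 \<union> cantor_add t ` q2"
proof -
  obtain q1 where "q1 \<in> F" "N \<subseteq> q1 \<union> X"
    using null_ideal_subset_Un[OF comparable meets \<open>N \<in> null_ideal\<close>] by blast
  moreover obtain q2 where "q2 \<in> F" "cantor_add t ` N \<subseteq> q2 \<union> X"
    using null_ideal_subset_Un[OF comparable meets cantor_add_image_null_ideal[OF \<open>N \<in> null_ideal\<close>]]
    by blast
  moreover have "x \<in> cantor_add t ` q2" if "x \<in> X" "cantor_add t x \<in> q2 \<union> X" for x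
  proof -
    have "cantor_add t x \<notin> X"
      using disjoint \<open>x \<in> X\<close> by blast
    with that(2) have "cantor_add t x \<in> q2"
      by blast
    then show ?thesis
      using image_eqI[of x "cantor_add t" "cantor_add t x"] by simp
  qed
  ultimately have "N \<subseteq> q1 \<union> cantor_add t ` q2"
    by blast
  with \<open>q1 \<in> F\<close> \<open>q2 \<in> F\<close> that show ?thesis
    by blast
qed

lemma null_cofinal_of_null_comparable:
  assumes comparable: "null_comparable F"
  shows "\<exists>G. null_cofinal G \<and> |G| \<le>o |F|"
proof (cases "|UNIV :: (nat \<Rightarrow> bool) set| \<le>o |F|")
  case True
  then show ?thesis
    using null_cofinal_le_continuum by (blast intro: ordLeq_transitive)
next
  case small: False
  define X where "X = (\<lambda>q. SOME x. x \<in> q) ` F"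
  have meets: "q \<inter> X \<noteq> {}" if "q \<in> F" for q
  proof -
    have "q \<noteq> {}"
      using comparable that unfolding comparable_family_def by blast
    then have "(SOME x. x \<in> q) \<in> q"
      by (simp add: some_in_eq)
    with that show ?thesis
      unfolding X_def by blast
  qed
  have square: "|F \<times> F| =o |F|"
    using card_of_Times_same_infinite null_comparable_infinite[OF comparable] by blast
  have "X \<times> X = map_prod (\<lambda>q. SOME x. x \<in> q) (\<lambda>q. SOME x. x \<in> q) ` (F \<times> F)"
    unfolding X_def by (simp add: map_prod_surj_on)
  then have "|X \<times> X| \<le>o |F \<times> F|"
    by (simp add: card_of_image)
  with small square have "\<not> |UNIV :: (nat \<Rightarrow> bool) set| \<le>o |X \<times> X|"
    by (metis ordLeq_ordIso_trans ordLeq_transitive)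
  then obtain t where disjoint: "X \<inter> cantor_add t ` X = {}"
    by (rule exists_cantor_add_disjoint)
  define G where "G = (\<lambda>(q1, q2). q1 \<union> cantor_add t ` q2) ` (F \<times> F)"
  have "G \<subseteq> null_ideal"
    using comparable unfolding G_def comparable_family_def
    by (auto intro: null_ideal_Un cantor_add_image_null_ideal)
  moreover have "\<exists>B\<in>G. N \<subseteq> B" if N: "N \<in> null_ideal" for N
  proof -
    obtain q1 q2 where "q1 \<in> F" "q2 \<in> F" "N \<subseteq> q1 \<union> cantor_add t ` q2"
      using null_ideal_subset_Un_cantor_add[OF comparable meets disjoint N] by blast
    then show ?thesis
      unfolding G_def by blast
  qed
  moreover have "|G| \<le>o |F|"
    using card_of_image square unfolding G_def by (blast intro: ordLeq_ordIso_trans)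
  ultimately show ?thesis
    unfolding null_cofinal_def by blast
qed

lemma min_card_attained:
  assumes "Q F0"
  obtains F where "Q F" "min_card Q = |F|" "\<And>F'. Q F' \<Longrightarrow> |F| \<le>o |F'|"
proof -
  let ?R = "card_of ` {F. Q F}"
  have "?R \<noteq> {}"
    using assms by blast
  moreover have "\<forall>r \<in> ?R. Card_order r"
    using card_of_Card_order by blast
  ultimately obtain r where "r \<in> ?R" "\<forall>r' \<in> ?R. r \<le>o r'"
    using exists_minim_Card_order[of ?R] by blast
  then have "\<exists>F. Q F \<and> (\<forall>F'. Q F' \<longrightarrow> card_of F \<le>o card_of F')"
    by blast
  define F where "F = (SOME F. Q F \<and> (\<forall>F'. Q F' \<longrightarrow> card_of F \<le>o card_of F'))"
  have "Q F \<and> (\<forall>F'. Q F' \<longrightarrow> card_of F \<le>o card_of F')"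
    unfolding F_def by (rule someI_ex) fact
  moreover have "min_card Q = |F|"
    unfolding min_card_def F_def ..
  ultimately show ?thesis
    by (intro that) auto
qed

theorem mainTheorem9:
  shows "ordIso2 (cp (null_ideal - {{}}) (\<subseteq>)) cof_null"
proof -
  have "null_comparable (null_ideal - {{}})"
    unfolding comparable_family_def by blast
  then obtain C where C: "null_comparable C"
      "cp (null_ideal - {{}}) (\<subseteq>) = |C|"
      "\<And>C'. null_comparable C' \<Longrightarrow> |C| \<le>o |C'|"
    unfolding cp_def by (rule min_card_attained[of null_comparable]) blast
  have "null_cofinal null_ideal"
    unfolding null_cofinal_def by blast
  then obtain G where G: "null_cofinal G" "cof_null = |G|" "\<And>G'. null_cofinal G' \<Longrightarrow> |G| \<le>o |G'|"
    unfolding cof_null_eq_min_card by (rule min_card_attained[of null_cofinal]) blast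
  have "|C| \<le>o |G - {{}}|"
    using C(3) null_comparable_of_null_cofinal[OF G(1)] .
  also have "|G - {{}}| \<le>o |G|"
    by (rule card_of_mono1) blast
  finally have "|C| \<le>o |G|" .
  moreover obtain G' where "null_cofinal G'" "|G'| \<le>o |C|"
    using null_cofinal_of_null_comparable[OF C(1)] by blast
  then have "|G| \<le>o |C|"
    using G(3) by (blast intro: ordLeq_transitive)
  ultimately show ?thesis
    unfolding C(2) G(2) by (simp add: ordIso_iff_ordLeq)
qed

end
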